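(* Let $r\ge2$ be a constant and let $\lambda\in O\!\left(\frac{n^{2r-1}}{\log n}\right)$ be polynomial in $n$. For an island model with $\lambda$ islands each running the (1+1) EA on $\mathrm{Fork}_{n,r}$, with any migration topology and/or policy, the expected number of rounds $E(T)$ until some island has the optimum satisfies $E(T)\in O\!\left(\frac{n^{2r}}{\lambda}\right)$.
   Context: $\mathrm{Fork}_{n,r}(x)=n+1$ if $x=0^r1^{n-r}$, $n+2$ if $x=1^{n-r}0^r$ (the optimum), and $|x|_1$ otherwise, for $n\ge 2r$. Island model: $\lambda$ islands, each with a current solution initialized independently and uniformly at random; in each round every island creates an offspring by flipping each bit independently with probability $1/n$ and keeps it if not worse; additionally solutions are occasionally sent to neighbours in a migration graph and accepted if not worse. *)

theory Defs
  imports "HOL-Probability.Probability" "HOL-Library.Landau_Symbols"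
begin

text \<open>Bit strings of length n are functions nat => bool, only positions i < n matter.
  An island configuration with lam islands is a function from island index to bit string;
  only islands j < lam matter.\<close>

type_synonym bits = "nat \<Rightarrow> bool"
type_synonym config = "nat \<Rightarrow> bits"

definition ones :: "nat \<Rightarrow> bits \<Rightarrow> nat" where
  "ones n x = card {i. i < n \<and> x i}"

definition is_opt :: "nat \<Rightarrow> nat \<Rightarrow> bits \<Rightarrow> bool" where
  "is_opt n r x = (\<forall>i<n. x i = (i < n - r))"

definition is_trap :: "nat \<Rightarrow> nat \<Rightarrow> bits \<Rightarrow> bool" where
  "is_trap n r x = (\<forall>i<n. x i = (r \<le> i))"

definition fork :: "nat \<Rightarrow> nat \<Rightarrow> bits \<Rightarrow> nat" where
  "fork n r x = (if is_opt n r x then n + 2 else if is_trap n r x then n + 1 else ones n x)"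

definition mutate :: "nat \<Rightarrow> bits \<Rightarrow> bits pmf" where
  "mutate n x = map_pmf (\<lambda>m i. x i \<noteq> m i)
     (Pi_pmf {..<n} False (\<lambda>_. bernoulli_pmf (1 / real n)))"

definition init_bits :: "nat \<Rightarrow> bits pmf" where
  "init_bits n = Pi_pmf {..<n} False (\<lambda>_. bernoulli_pmf (1 / 2))"

definition island_init :: "nat \<Rightarrow> nat \<Rightarrow> config pmf" where
  "island_init n lam = Pi_pmf {..<lam} (\<lambda>_. False) (\<lambda>_. init_bits n)"

definition accept :: "(bits \<Rightarrow> nat) \<Rightarrow> bits \<Rightarrow> bits \<Rightarrow> bits" where
  "accept f x y = (if f y \<ge> f x then y else x)"

definition mut_round :: "nat \<Rightarrow> nat \<Rightarrow> nat \<Rightarrow> config \<Rightarrow> config pmf" where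
  "mut_round n r lam s = map_pmf
     (\<lambda>ys i. if i < lam then accept (fork n r) (s i) (ys i) else s i)
     (Pi_pmf {..<lam} (\<lambda>_. False) (\<lambda>i. mutate n (s i)))"

text \<open>A migration policy on migration graph E: in round t, given the current configuration,
  it (possibly randomly, possibly adaptively) produces a new configuration in which every island
  either keeps its solution or has accepted a not-worse solution sent by an in-neighbour in E.\<close>
definition valid_migration ::
  "nat \<Rightarrow> nat \<Rightarrow> nat \<Rightarrow> (nat \<times> nat) set \<Rightarrow> (nat \<Rightarrow> config \<Rightarrow> config pmf) \<Rightarrow> bool" where
  "valid_migration n r lam E P =
     (\<forall>t s s'. s' \<in> set_pmf (P t s) \<longrightarrow>
        (\<forall>j<lam. s' j = s j \<or>
           (\<exists>i<lam. (i, j) \<in> E \<and> s' j = s i \<and> fork n r (s i) \<ge> fork n r (s j))))"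

definition hit :: "nat \<Rightarrow> nat \<Rightarrow> nat \<Rightarrow> config \<Rightarrow> bool" where
  "hit n r lam s = (\<exists>j<lam. is_opt n r (s j))"

primrec run :: "nat \<Rightarrow> nat \<Rightarrow> nat \<Rightarrow> (nat \<Rightarrow> config \<Rightarrow> config pmf) \<Rightarrow> nat \<Rightarrow> config pmf" where
  "run n r lam P 0 = island_init n lam"
| "run n r lam P (Suc t) = bind_pmf (run n r lam P t)
     (\<lambda>s. if hit n r lam s then return_pmf s else bind_pmf (mut_round n r lam s) (P t))"

text \<open>E(T) = sum over t of Pr(T > t), T = number of rounds until some island is optimal.\<close>
definition expected_T :: "nat \<Rightarrow> nat \<Rightarrow> nat \<Rightarrow> (nat \<Rightarrow> config \<Rightarrow> config pmf) \<Rightarrow> ennreal" where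
  "expected_T n r lam P =
     (\<Sum>t. ennreal (measure_pmf.prob (run n r lam P t) {s. \<not> hit n r lam s}))"

end

theory Submission
  imports Defs
begin

text \<open>
  Call the gap of an island the amount by which its Fork value falls short of n, and the
  potential of a configuration the sum of the gaps (zero once the optimum has been found).
  An island with positive gap lies on the OneMax slope and has at least gap many one-bit
  mutations that raise its fitness, each of probability at least
  \<delta> = (1/n)(1 - 1/n)^n, while migration only replaces solutions by better ones. Hence the
  expected potential contracts by the factor 1 - \<delta> per round, so it is still positive after
  t rounds with probability at most \<lambda>n(1 - \<delta>)^t, and these rounds contribute
  O(n log(\<lambda>n)).

  With zero potential and no optimum, every island holds 1^n or the trap, both within Hamming
  distance 2r of the optimum, so such a round misses the optimum with probability at most
  q = (1 - p)^\<lambda>, where p = n^(-2r) (1 - 1/n)^n. Since this probability mass leaks away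
  at rate 1 - q, a telescoping sum bounds the expected number of such rounds by
  1/(1 - q) \<le> 1 + 1/(\<lambda>p) = O(n^(2r)/\<lambda>). The hypothesis \<lambda> log n = O(n^(2r-1)) makes the
  first contribution O(n^(2r)/\<lambda>) as well.
\<close>

lemma ones_le: "ones n x \<le> n"
  unfolding ones_def by (rule order.trans[OF card_mono[of "{..<n}"]]) auto

lemma ones_geD: assumes "n \<le> ones n x" "i < n" shows "x i"
proof -
  have "{i. i < n \<and> x i} = {..<n}"
    using assms(1) ones_le[of n x] unfolding ones_def by (intro card_subset_eq) auto
  then show ?thesis using assms(2) by auto
qed

lemma ones_fun_upd_True: assumes "i < n" "\<not> x i" shows "ones n (x(i := True)) = Suc (ones n x)"
proof -
  have "{j. j < n \<and> (x(i := True)) j} = insert i {j. j < n \<and> x j}" using assms by auto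
  then show ?thesis unfolding ones_def using assms by simp
qed

lemma card_zeros: "card {i. i < n \<and> \<not> x i} = n - ones n x"
proof -
  have "{i. i < n \<and> \<not> x i} = {..<n} - {i. i < n \<and> x i}" by auto
  then show ?thesis unfolding ones_def by (simp only:) (subst card_Diff_subset; auto)
qed

lemma ones_le_fork: "ones n x \<le> fork n r x"
  using ones_le[of n x] unfolding fork_def by auto

lemma fork_ge_iff_is_opt: "n + 2 \<le> fork n r x \<longleftrightarrow> is_opt n r x"
  using ones_le[of n x] unfolding fork_def by auto

lemma fork_eq_ones_if_less: "fork n r x < n \<Longrightarrow> fork n r x = ones n x"
  unfolding fork_def by (auto split: if_splits)

lemma accept_ge_left: "f x \<le> f (accept f x y)"
  unfolding accept_def by auto

lemma accept_ge_right: "f y \<le> f (accept f x y)"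
  unfolding accept_def by auto

definition jump_prob :: "nat \<Rightarrow> nat \<Rightarrow> real" where
  "jump_prob n k = (1 / real n) ^ k * (1 - 1 / real n) ^ n"

lemma jump_prob_nonneg: "0 \<le> jump_prob n k"
  unfolding jump_prob_def by (cases "n = 0") auto

lemma jump_prob_pos: "2 \<le> n \<Longrightarrow> 0 < jump_prob n k"
  unfolding jump_prob_def by auto

lemma jump_prob_le_1: "1 \<le> n \<Longrightarrow> jump_prob n k \<le> 1"
  unfolding jump_prob_def by (intro mult_le_one power_le_one) auto

lemma pmf_mutate:
  assumes n: "1 \<le> n" and outside: "\<And>i. n \<le> i \<Longrightarrow> y i = x i"
  shows "pmf (mutate n x) y = (1 / real n) ^ card {i. i < n \<and> x i \<noteq> y i}
           * (1 - 1 / real n) ^ (n - card {i. i < n \<and> x i \<noteq> y i})"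
proof -
  define S where "S = {i. i < n \<and> x i \<noteq> y i}"
  define flips where "flips i = (x i \<noteq> y i)" for i
  have inj: "inj (\<lambda>m i. x i \<noteq> m i)" by (auto simp: inj_def fun_eq_iff)
  have y: "y = (\<lambda>i. x i \<noteq> flips i)" by (auto simp: flips_def fun_eq_iff)
  have "pmf (mutate n x) y = pmf (Pi_pmf {..<n} False (\<lambda>_. bernoulli_pmf (1 / real n))) flips"
    unfolding mutate_def y by (rule pmf_map_inj'[OF inj])
  also have "\<dots> = (\<Prod>i<n. if i \<in> S then 1 / real n else 1 - 1 / real n)"
    using n outside by (subst pmf_Pi) (auto simp: flips_def S_def intro!: prod.cong)
  also have "\<dots> = (1 / real n) ^ card S * (1 - 1 / real n) ^ card ({..<n} - S)"
    by (subst prod.If_cases) (auto simp: S_def Int_absorb1 subset_eq Diff_eq)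
  also have "card ({..<n} - S) = n - card S"
    by (subst card_Diff_subset) (auto simp: S_def)
  finally show ?thesis unfolding S_def .
qed

lemma pmf_mutate_ge:
  assumes n: "1 \<le> n" and outside: "\<And>i. n \<le> i \<Longrightarrow> y i = x i"
    and dist: "card {i. i < n \<and> x i \<noteq> y i} \<le> k"
  shows "jump_prob n k \<le> pmf (mutate n x) y"
proof -
  have p: "0 \<le> 1 / real n" "1 / real n \<le> 1" using n by auto
  have "jump_prob n k \<le> (1 / real n) ^ card {i. i < n \<and> x i \<noteq> y i}
           * (1 - 1 / real n) ^ (n - card {i. i < n \<and> x i \<noteq> y i})"
    unfolding jump_prob_def using p dist by (intro mult_mono power_decreasing) auto
  then show ?thesis using pmf_mutate[OF n outside] by simp
qed

text \<open>By truncated subtraction the gap vanishes exactly on 1^n, the trap and the optimum.\<close>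

definition fitness_gap :: "nat \<Rightarrow> nat \<Rightarrow> bits \<Rightarrow> nat" where
  "fitness_gap n r x = n - fork n r x"

lemma fitness_gap_antimono: "fork n r x \<le> fork n r y \<Longrightarrow> fitness_gap n r y \<le> fitness_gap n r x"
  unfolding fitness_gap_def by simp

lemma fitness_gap_le: "fitness_gap n r x \<le> n"
  unfolding fitness_gap_def by simp

lemma prob_mutate_is_opt_ge:
  assumes n: "1 \<le> n" "2 * r \<le> n" and not_opt: "\<not> is_opt n r x"
    and no_gap: "fitness_gap n r x = 0"
  shows "jump_prob n (2 * r) \<le> measure_pmf.prob (mutate n x) {y. is_opt n r y}"
proof -
  define opt where "opt i = (if i < n then i < n - r else x i)" for i
  have "{i. i < n \<and> x i \<noteq> opt i} \<subseteq> {..<r} \<union> {n - r..<n}"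
  proof (cases "is_trap n r x")
    case True
    then show ?thesis using n unfolding is_trap_def opt_def by auto
  next
    case False
    then have "n \<le> ones n x" using not_opt no_gap unfolding fitness_gap_def fork_def by auto
    then show ?thesis using ones_geD unfolding opt_def by auto
  qed
  then have "card {i. i < n \<and> x i \<noteq> opt i} \<le> card ({..<r} \<union> {n - r..<n})"
    by (intro card_mono) auto
  also have "\<dots> \<le> 2 * r"
    using card_Un_le[of "{..<r}" "{n - r..<n}"] n by simp
  finally have "jump_prob n (2 * r) \<le> pmf (mutate n x) opt"
    by (intro pmf_mutate_ge n) (auto simp: opt_def)
  also have "\<dots> \<le> measure_pmf.prob (mutate n x) {y. is_opt n r y}"
    unfolding measure_pmf_single[symmetric]
    by (intro measure_pmf.finite_measure_mono) (auto simp: opt_def is_opt_def)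
  finally show ?thesis .
qed

lemma prob_mutate_flip_zero_ge:
  assumes n: "1 \<le> n"
  shows "real (fitness_gap n r x) * jump_prob n 1
           \<le> measure_pmf.prob (mutate n x) ((\<lambda>i. x(i := True)) ` {i. i < n \<and> \<not> x i})"
proof -
  define Z where "Z = {i. i < n \<and> \<not> x i}"
  have "fitness_gap n r x \<le> card Z"
    using ones_le_fork[of n x r] unfolding fitness_gap_def Z_def card_zeros by simp
  then have "real (fitness_gap n r x) * jump_prob n 1 \<le> (\<Sum>i\<in>Z. jump_prob n 1)"
    using jump_prob_nonneg[of n 1] by (simp add: mult_right_mono)
  also have "\<dots> \<le> (\<Sum>i\<in>Z. pmf (mutate n x) (x(i := True)))"
  proof (intro sum_mono pmf_mutate_ge n)
    fix i assume "i \<in> Z"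
    then have "{j. j < n \<and> x j \<noteq> (x(i := True)) j} = {i}" unfolding Z_def by auto
    then show "card {j. j < n \<and> x j \<noteq> (x(i := True)) j} \<le> 1" by simp
    show "(x(i := True)) j = x j" if "n \<le> j" for j using \<open>i \<in> Z\<close> that unfolding Z_def by auto
  qed
  also have "\<dots> = measure_pmf.prob (mutate n x) ((\<lambda>i. x(i := True)) ` Z)"
  proof -
    have "inj_on (\<lambda>i. x(i := True)) Z" unfolding Z_def inj_on_def by (auto simp: fun_eq_iff)
    then show ?thesis by (simp add: measure_measure_pmf_finite Z_def sum.reindex)
  qed
  finally show ?thesis unfolding Z_def .
qed

lemma fitness_gap_accept_plus_indicator_le:
  assumes gap: "0 < fitness_gap n r x"
  shows "real (fitness_gap n r (accept (fork n r) x y))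
           + indicator ((\<lambda>i. x(i := True)) ` {i. i < n \<and> \<not> x i}) y \<le> real (fitness_gap n r x)"
proof (cases "y \<in> (\<lambda>i. x(i := True)) ` {i. i < n \<and> \<not> x i}")
  case True
  then obtain i where i: "i < n" "\<not> x i" "y = x(i := True)" by blast
  have below: "fork n r x < n" using gap unfolding fitness_gap_def by simp
  have "fork n r x < ones n y"
    using ones_fun_upd_True[of i n x] i fork_eq_ones_if_less[OF below] by simp
  also have "\<dots> \<le> fork n r (accept (fork n r) x y)"
    using ones_le_fork accept_ge_right[of "fork n r"] order_trans by metis
  finally show ?thesis using True below unfolding fitness_gap_def by simp
next
  case False
  then show ?thesis using fitness_gap_antimono[OF accept_ge_left[of "fork n r"]] by simp
qed

lemma nn_integral_fitness_gap_accept: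
  assumes n: "1 \<le> n"
  shows "(\<integral>\<^sup>+ y. ennreal (real (fitness_gap n r (accept (fork n r) x y))) \<partial>mutate n x)
           \<le> ennreal (real (fitness_gap n r x) * (1 - jump_prob n 1))"
proof (cases "fitness_gap n r x = 0")
  case True
  then have "fitness_gap n r (accept (fork n r) x y) = 0" for y
    using fitness_gap_antimono[OF accept_ge_left[of "fork n r"]] by (metis le_zero_eq)
  then show ?thesis by simp
next
  case False
  define d where "d = real (fitness_gap n r x)"
  define Y where "Y = (\<lambda>i. x(i := True)) ` {i. i < n \<and> \<not> x i}"
  define J where "J = (\<integral>\<^sup>+ y. ennreal (real (fitness_gap n r (accept (fork n r) x y))) \<partial>mutate n x)"
  have pointwise: "ennreal (real (fitness_gap n r (accept (fork n r) x y))) + indicator Y y \<le> ennreal d"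
    for y
    using ennreal_leI[OF fitness_gap_accept_plus_indicator_le[of n r x y]] False
    unfolding d_def Y_def by (simp add: ennreal_plus ennreal_indicator)
  have "J + emeasure (mutate n x) Y
      = (\<integral>\<^sup>+ y. ennreal (real (fitness_gap n r (accept (fork n r) x y))) + indicator Y y \<partial>mutate n x)"
    unfolding J_def by (subst nn_integral_add) auto
  also have "\<dots> \<le> (\<integral>\<^sup>+ y. ennreal d \<partial>mutate n x)"
    by (intro nn_integral_mono pointwise)
  finally have "J + ennreal (d * jump_prob n 1) \<le> ennreal d"
    using prob_mutate_flip_zero_ge[OF n, of r x]
    unfolding d_def Y_def measure_pmf.emeasure_eq_measure
    by (simp add: measure_pmf.emeasure_space_1) (meson add_left_mono ennreal_leI order_trans)
  then have "J \<le> ennreal d - ennreal (d * jump_prob n 1)"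
    by (simp add: ennreal_le_minus_iff)
  also have "\<dots> = ennreal (d * (1 - jump_prob n 1))"
    using jump_prob_nonneg[of n 1] by (simp add: ennreal_minus d_def right_diff_distrib)
  finally show ?thesis unfolding J_def d_def .
qed

lemma valid_migration_fork_mono:
  assumes "valid_migration n r lam E P" "s' \<in> set_pmf (P t s)" "j < lam"
  shows "fork n r (s j) \<le> fork n r (s' j)"
  using assms unfolding valid_migration_def by fastforce

lemma valid_migration_hit:
  assumes valid: "valid_migration n r lam E P" and s': "s' \<in> set_pmf (P t s)"
    and "hit n r lam s"
  shows "hit n r lam s'"
proof -
  obtain j where j: "j < lam" "is_opt n r (s j)" using \<open>hit n r lam s\<close> unfolding hit_def by auto
  then have "is_opt n r (s' j)"
    using valid_migration_fork_mono[OF valid s' j(1)] fork_ge_iff_is_opt by (meson order_trans)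
  then show ?thesis unfolding hit_def using j(1) by auto
qed

lemma emeasure_migration_not_hit:
  assumes valid: "valid_migration n r lam E P"
  shows "emeasure (bind_pmf M (P t)) {s. \<not> hit n r lam s} \<le> emeasure M {s. \<not> hit n r lam s}"
proof -
  have "emeasure (P t s) {s. \<not> hit n r lam s} \<le> indicator {s. \<not> hit n r lam s} s" for s
  proof (cases "hit n r lam s")
    case True
    then have "{s. \<not> hit n r lam s} \<inter> set_pmf (P t s) = {}"
      using valid_migration_hit[OF valid] by blast
    then show ?thesis by (metis emeasure_Int_set_pmf emeasure_empty zero_le)
  next
    case False
    then show ?thesis by (simp add: measure_pmf.emeasure_eq_measure)
  qed
  then have "(\<integral>\<^sup>+ s. emeasure (P t s) {s. \<not> hit n r lam s} \<partial>M)
      \<le> (\<integral>\<^sup>+ s. indicator {s. \<not> hit n r lam s} s \<partial>M)"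
    by (intro nn_integral_mono)
  then show ?thesis by simp
qed

lemma map_pmf_mut_round_component:
  assumes "j < lam"
  shows "map_pmf (\<lambda>s'. s' j) (mut_round n r lam s) = map_pmf (accept (fork n r) (s j)) (mutate n (s j))"
proof -
  have "map_pmf (\<lambda>s'. s' j) (mut_round n r lam s)
      = map_pmf (accept (fork n r) (s j))
          (map_pmf (\<lambda>ys. ys j) (Pi_pmf {..<lam} (\<lambda>_. False) (\<lambda>i. mutate n (s i))))"
    unfolding mut_round_def map_pmf_comp using assms by simp
  then show ?thesis using assms by (simp add: Pi_pmf_component)
qed

definition potential :: "nat \<Rightarrow> nat \<Rightarrow> nat \<Rightarrow> config \<Rightarrow> nat" where
  "potential n r lam s = (if hit n r lam s then 0 else (\<Sum>j<lam. fitness_gap n r (s j)))"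

lemma potential_le: "potential n r lam s \<le> lam * n"
proof -
  have "(\<Sum>j<lam. fitness_gap n r (s j)) \<le> (\<Sum>j<lam. n)" by (intro sum_mono fitness_gap_le)
  then show ?thesis unfolding potential_def by auto
qed

lemma nn_integral_potential_migration:
  assumes valid: "valid_migration n r lam E P"
  shows "(\<integral>\<^sup>+ s'. ennreal (real (potential n r lam s')) \<partial>bind_pmf M (P t))
           \<le> (\<integral>\<^sup>+ s. (\<Sum>j<lam. ennreal (real (fitness_gap n r (s j)))) \<partial>M)"
proof -
  have "(\<integral>\<^sup>+ s'. ennreal (real (potential n r lam s')) \<partial>P t s)
      \<le> (\<Sum>j<lam. ennreal (real (fitness_gap n r (s j))))" for s
  proof -
    have "(\<integral>\<^sup>+ s'. ennreal (real (potential n r lam s')) \<partial>P t s)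
        \<le> (\<integral>\<^sup>+ s'. ennreal (real (\<Sum>j<lam. fitness_gap n r (s j))) \<partial>P t s)"
    proof (intro nn_integral_mono_AE, unfold AE_measure_pmf_iff, intro ballI ennreal_leI of_nat_mono)
      fix s' assume s': "s' \<in> set_pmf (P t s)"
      have "potential n r lam s' \<le> (\<Sum>j<lam. fitness_gap n r (s' j))"
        unfolding potential_def by auto
      also have "\<dots> \<le> (\<Sum>j<lam. fitness_gap n r (s j))"
        by (intro sum_mono fitness_gap_antimono valid_migration_fork_mono[OF valid s']) auto
      finally show "potential n r lam s' \<le> (\<Sum>j<lam. fitness_gap n r (s j))" .
    qed
    then show ?thesis
      by (simp add: measure_pmf.emeasure_space_1 ennreal_of_nat_eq_real_of_nat)
  qed
  then show ?thesis by (simp add: nn_integral_mono)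
qed

lemma nn_integral_potential_round:
  assumes valid: "valid_migration n r lam E P" and n: "1 \<le> n" and not_hit: "\<not> hit n r lam s"
  shows "(\<integral>\<^sup>+ s'. ennreal (real (potential n r lam s')) \<partial>bind_pmf (mut_round n r lam s) (P t))
           \<le> ennreal ((1 - jump_prob n 1) * real (potential n r lam s))"
proof -
  have component: "(\<integral>\<^sup>+ s'. ennreal (real (fitness_gap n r (s' j))) \<partial>mut_round n r lam s)
      \<le> ennreal (real (fitness_gap n r (s j)) * (1 - jump_prob n 1))" if "j < lam" for j
    using nn_integral_fitness_gap_accept[OF n, where x = "s j"]
      arg_cong[OF map_pmf_mut_round_component[OF that],
        of "\<lambda>M. \<integral>\<^sup>+ y. ennreal (real (fitness_gap n r y)) \<partial>M"]
    by simp
  have "(\<integral>\<^sup>+ s'. ennreal (real (potential n r lam s')) \<partial>bind_pmf (mut_round n r lam s) (P t))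
      \<le> (\<integral>\<^sup>+ s'. (\<Sum>j<lam. ennreal (real (fitness_gap n r (s' j)))) \<partial>mut_round n r lam s)"
    by (rule nn_integral_potential_migration[OF valid])
  also have "\<dots> = (\<Sum>j<lam. \<integral>\<^sup>+ s'. ennreal (real (fitness_gap n r (s' j))) \<partial>mut_round n r lam s)"
    by (rule nn_integral_sum) auto
  also have "\<dots> \<le> (\<Sum>j<lam. ennreal (real (fitness_gap n r (s j)) * (1 - jump_prob n 1)))"
    by (intro sum_mono component) simp
  also have "\<dots> = ennreal ((1 - jump_prob n 1) * real (potential n r lam s))"
    using jump_prob_le_1[OF n, of 1] not_hit
    by (simp add: potential_def sum_ennreal sum_distrib_left mult.commute)
  finally show ?thesis .
qed

lemma emeasure_mut_round_not_hit:
  "emeasure (mut_round n r lam s) {s'. \<not> hit n r lam s'}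
     \<le> ennreal (\<Prod>j<lam. measure_pmf.prob (mutate n (s j)) {y. \<not> is_opt n r y})"
proof -
  define g where "g ys i = (if i < lam then accept (fork n r) (s i) (ys i) else s i)" for ys i
  define M where "M = Pi_pmf {..<lam} (\<lambda>_. False) (\<lambda>i. mutate n (s i))"
  have "g -` {s'. \<not> hit n r lam s'} \<subseteq> Pi {..<lam} (\<lambda>_. {y. \<not> is_opt n r y})"
  proof (intro subsetI Pi_I CollectI notI)
    fix ys j assume "ys \<in> g -` {s'. \<not> hit n r lam s'}" "j \<in> {..<lam}" "is_opt n r (ys j)"
    moreover have "fork n r (ys j) \<le> fork n r (g ys j)"
      using \<open>j \<in> {..<lam}\<close> accept_ge_right[of "fork n r"] by (simp add: g_def)
    ultimately have "is_opt n r (g ys j)"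
      using fork_ge_iff_is_opt order_trans by metis
    then show False
      using \<open>ys \<in> g -` {s'. \<not> hit n r lam s'}\<close> \<open>j \<in> {..<lam}\<close> unfolding hit_def by auto
  qed
  then have "emeasure M (g -` {s'. \<not> hit n r lam s'})
      \<le> emeasure M (Pi {..<lam} (\<lambda>_. {y. \<not> is_opt n r y}))"
    by (intro emeasure_mono) auto
  then show ?thesis
    unfolding mut_round_def g_def[symmetric] M_def[symmetric]
    by (simp add: M_def measure_pmf.emeasure_eq_measure measure_Pi_pmf_Pi)
qed

lemma emeasure_round_not_hit:
  assumes valid: "valid_migration n r lam E P" and n: "1 \<le> n" "2 * r \<le> n"
    and not_hit: "\<not> hit n r lam s" and no_potential: "potential n r lam s = 0"
  shows "emeasure (bind_pmf (mut_round n r lam s) (P t)) {s'. \<not> hit n r lam s'}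
           \<le> ennreal ((1 - jump_prob n (2 * r)) ^ lam)"
proof -
  have no_gap: "(\<Sum>j<lam. fitness_gap n r (s j)) = 0"
    using not_hit no_potential unfolding potential_def by simp
  have "measure_pmf.prob (mutate n (s j)) {y. \<not> is_opt n r y} \<le> 1 - jump_prob n (2 * r)"
    if "j < lam" for j
  proof -
    have "\<not> is_opt n r (s j)" "fitness_gap n r (s j) = 0"
      using not_hit no_gap that unfolding hit_def by auto
    then have "jump_prob n (2 * r) \<le> measure_pmf.prob (mutate n (s j)) {y. is_opt n r y}"
      by (rule prob_mutate_is_opt_ge[OF n])
    then show ?thesis
      using measure_pmf.prob_compl[of "{y. is_opt n r y}" "mutate n (s j)"]
      by (simp add: Compl_eq_Diff_UNIV[symmetric] Collect_neg_eq)
  qed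
  then have "(\<Prod>j<lam. measure_pmf.prob (mutate n (s j)) {y. \<not> is_opt n r y})
      \<le> (1 - jump_prob n (2 * r)) ^ lam"
    using prod_mono[of "{..<lam}" "\<lambda>j. measure_pmf.prob (mutate n (s j)) {y. \<not> is_opt n r y}"
        "\<lambda>_. 1 - jump_prob n (2 * r)"]
    by simp
  then show ?thesis
    using emeasure_migration_not_hit[OF valid] emeasure_mut_round_not_hit
    by (meson ennreal_leI order_trans)
qed

lemma sum_le_of_leaking_recurrence:
  fixes u a b :: "nat \<Rightarrow> real" and q :: real
  assumes split: "\<And>t. u t = a t + b t" and nonneg: "\<And>t. 0 \<le> a t" "\<And>t. 0 \<le> b t"
    and start: "u 0 \<le> 1" and step: "\<And>t. u (Suc t) \<le> a t + q * b t" and q: "q < 1"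
  shows "(\<Sum>t<N. u t) \<le> 1 / (1 - q) + (\<Sum>t<N. a t)"
proof -
  have "(1 - q) * (\<Sum>t<N. b t) = (\<Sum>t<N. (1 - q) * b t)" by (simp add: sum_distrib_left)
  also have "\<dots> \<le> (\<Sum>t<N. u t - u (Suc t))"
    using step split by (intro sum_mono) (simp add: algebra_simps)
  also have "\<dots> = u 0 - u N" by (rule sum_lessThan_telescope')
  also have "\<dots> \<le> 1" using start split[of N] nonneg[of N] by simp
  finally have "(\<Sum>t<N. b t) \<le> 1 / (1 - q)" using q by (simp add: field_simps)
  then show ?thesis by (simp add: split sum.distrib)
qed

lemma sum_min_one_geometric_le:
  fixes K d :: real
  assumes K: "1 \<le> K" and d: "0 < d" "d \<le> 1"
  shows "(\<Sum>t<N. min 1 (K * (1 - d) ^ t)) \<le> (ln K + 1) / d + 1"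
proof -
  define t0 where "t0 = nat \<lceil>ln K / d\<rceil>"
  have t0: "ln K / d \<le> real t0" "real t0 \<le> ln K / d + 1"
    using K d unfolding t0_def by (auto intro!: divide_nonneg_pos)
  have "(1 - d) ^ t0 \<le> exp (- d) ^ t0"
    using d by (intro power_mono) (auto simp: exp_ge_add_one_self[of "-d", simplified])
  also have "\<dots> = exp (- (d * real t0))" by (simp add: exp_of_nat_mult[symmetric] mult.commute)
  also have "\<dots> \<le> exp (- ln K)" using t0(1) d by (simp add: field_simps)
  also have "\<dots> = 1 / K" using K by (simp add: exp_minus inverse_eq_divide)
  finally have tail_start: "K * (1 - d) ^ t0 \<le> 1" using K by (simp add: field_simps)
  have "(\<Sum>t<N. min 1 (K * (1 - d) ^ t)) \<le> (\<Sum>t<t0 + N. min 1 (K * (1 - d) ^ t))"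
    using K d by (intro sum_mono2) auto
  also have "\<dots> = (\<Sum>t<t0. min 1 (K * (1 - d) ^ t)) + (\<Sum>t<N. min 1 (K * (1 - d) ^ (t0 + t)))"
    by (induction N) auto
  also have "\<dots> \<le> (\<Sum>t<t0. 1) + (\<Sum>t<N. K * (1 - d) ^ t0 * (1 - d) ^ t)"
    by (intro add_mono sum_mono) (auto simp: power_add mult.assoc)
  also have "(\<Sum>t<N. K * (1 - d) ^ t0 * (1 - d) ^ t) \<le> (\<Sum>t<N. (1 - d) ^ t)"
    using tail_start K d by (intro sum_mono mult_left_le_one_le) auto
  also have "(\<Sum>t<N. (1 - d) ^ t) \<le> 1 / d"
    using d by (subst sum_gp_strict) (auto intro: divide_right_mono)
  finally show ?thesis using t0(2) by (simp add: add_divide_distrib)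
qed

lemma inverse_one_minus_power_le:
  fixes p :: real
  assumes p: "0 < p" "p \<le> 1" and lam: "1 \<le> lam"
  shows "(1 - p) ^ lam < 1" "1 / (1 - (1 - p) ^ lam) \<le> 1 + 1 / (real lam * p)"
proof -
  have "(1 - p) ^ lam \<le> exp (- p) ^ lam"
    using p by (intro power_mono) (auto simp: exp_ge_add_one_self[of "-p", simplified])
  also have "\<dots> = 1 / exp (real lam * p)" by (simp add: exp_of_nat_mult[symmetric] exp_minus field_simps)
  also have "\<dots> \<le> 1 / (1 + real lam * p)"
    using p lam by (intro divide_left_mono exp_ge_add_one_self) (auto intro!: mult_pos_pos add_pos_nonneg)
  finally have le: "(1 - p) ^ lam \<le> 1 / (1 + real lam * p)" .
  have pos: "0 < real lam * p" using p lam by auto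
  then have "1 / (1 + real lam * p) < 1" by simp
  then show below_one: "(1 - p) ^ lam < 1" using le by linarith
  have "real lam * p / (1 + real lam * p) \<le> 1 - (1 - p) ^ lam"
    using le pos by (simp add: field_simps)
  then have "1 / (1 - (1 - p) ^ lam) \<le> 1 / (real lam * p / (1 + real lam * p))"
    using pos below_one by (intro divide_left_mono) auto
  also have "\<dots> = 1 + 1 / (real lam * p)" using p lam by (simp add: add_divide_distrib)
  finally show "1 / (1 - (1 - p) ^ lam) \<le> 1 + 1 / (real lam * p)" .
qed

lemma nn_integral_potential_run:
  assumes valid: "valid_migration n r lam E P" and n: "1 \<le> n"
  shows "(\<integral>\<^sup>+ s. ennreal (real (potential n r lam s)) \<partial>run n r lam P t)
           \<le> ennreal ((1 - jump_prob n 1) ^ t * (real lam * real n))"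
proof (induction t)
  case 0
  have "real (potential n r lam s) \<le> real lam * real n" for s
    using potential_le[of n r lam s] by (simp flip: of_nat_mult)
  then have "(\<integral>\<^sup>+ s. ennreal (real (potential n r lam s)) \<partial>run n r lam P 0)
      \<le> (\<integral>\<^sup>+ s. ennreal (real lam * real n) \<partial>run n r lam P 0)"
    by (intro nn_integral_mono ennreal_leI)
  then show ?case by (simp add: measure_pmf.emeasure_space_1)
next
  case (Suc t)
  define c where "c = 1 - jump_prob n 1"
  have c: "0 \<le> c" using jump_prob_le_1[OF n] unfolding c_def by simp
  have round: "(\<integral>\<^sup>+ s'. ennreal (real (potential n r lam s'))
      \<partial>(if hit n r lam s then return_pmf s else bind_pmf (mut_round n r lam s) (P t)))
      \<le> ennreal c * ennreal (real (potential n r lam s))" for s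
  proof (cases "hit n r lam s")
    case True
    then show ?thesis by (simp add: potential_def)
  next
    case False
    then show ?thesis
      using nn_integral_potential_round[OF valid n False] c by (simp add: c_def ennreal_mult)
  qed
  have "(\<integral>\<^sup>+ s. ennreal (real (potential n r lam s)) \<partial>run n r lam P (Suc t))
      \<le> (\<integral>\<^sup>+ s. ennreal c * ennreal (real (potential n r lam s)) \<partial>run n r lam P t)"
    by (simp add: nn_integral_mono round)
  also have "\<dots> = ennreal c * (\<integral>\<^sup>+ s. ennreal (real (potential n r lam s)) \<partial>run n r lam P t)"
    by (rule nn_integral_cmult) simp
  also have "\<dots> \<le> ennreal c * ennreal (c ^ t * (real lam * real n))"
    using Suc.IH by (simp add: c_def mult_left_mono)
  also have "\<dots> = ennreal (c ^ Suc t * (real lam * real n))"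
    using c by (simp add: ennreal_mult[symmetric] mult.assoc)
  finally show ?case unfolding c_def .
qed

lemma prob_potential_pos_run:
  assumes valid: "valid_migration n r lam E P" and n: "1 \<le> n"
  shows "measure_pmf.prob (run n r lam P t) {s. potential n r lam s \<noteq> 0}
           \<le> (1 - jump_prob n 1) ^ t * (real lam * real n)"
proof -
  have "emeasure (run n r lam P t) {s. potential n r lam s \<noteq> 0}
      = (\<integral>\<^sup>+ s. indicator {s. potential n r lam s \<noteq> 0} s \<partial>run n r lam P t)"
    by simp
  also have "\<dots> \<le> (\<integral>\<^sup>+ s. ennreal (real (potential n r lam s)) \<partial>run n r lam P t)"
    by (intro nn_integral_mono) (auto simp: indicator_def)
  also have "\<dots> \<le> ennreal ((1 - jump_prob n 1) ^ t * (real lam * real n))"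
    by (rule nn_integral_potential_run[OF valid n])
  finally show ?thesis
    using jump_prob_le_1[OF n, of 1] by (simp add: measure_pmf.emeasure_eq_measure ennreal_le_iff)
qed

lemma prob_not_hit_run_Suc:
  assumes valid: "valid_migration n r lam E P" and n: "1 \<le> n" "2 * r \<le> n"
  defines "A \<equiv> {s. potential n r lam s \<noteq> 0}"
    and "B \<equiv> {s. \<not> hit n r lam s \<and> potential n r lam s = 0}"
  shows "measure_pmf.prob (run n r lam P (Suc t)) {s. \<not> hit n r lam s}
           \<le> measure_pmf.prob (run n r lam P t) A
             + (1 - jump_prob n (2 * r)) ^ lam * measure_pmf.prob (run n r lam P t) B"
proof -
  define q where "q = (1 - jump_prob n (2 * r)) ^ lam"
  have q: "0 \<le> q" using jump_prob_le_1[OF n(1)] unfolding q_def by simp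
  have round: "emeasure (if hit n r lam s then return_pmf s else bind_pmf (mut_round n r lam s) (P t))
      {s. \<not> hit n r lam s} \<le> indicator A s + ennreal q * indicator B s" for s
  proof -
    consider "hit n r lam s" | "s \<in> A" | "s \<in> B" unfolding A_def B_def by auto
    then show ?thesis
    proof cases
      case 1
      then show ?thesis by simp
    next
      case 2
      then show ?thesis by (auto simp: measure_pmf.emeasure_eq_measure intro!: add_increasing2)
    next
      case 3
      then show ?thesis
        using emeasure_round_not_hit[OF valid n, of s t] unfolding B_def q_def
      by (auto intro: add_increasing)
    qed
  qed
  have "emeasure (run n r lam P (Suc t)) {s. \<not> hit n r lam s}
      \<le> (\<integral>\<^sup>+ s. indicator A s + ennreal q * indicator B s \<partial>run n r lam P t)"
    by (simp add: nn_integral_mono round)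
  also have "\<dots> = ennreal (measure_pmf.prob (run n r lam P t) A
      + q * measure_pmf.prob (run n r lam P t) B)"
    using q by (simp add: nn_integral_add nn_integral_cmult measure_pmf.emeasure_eq_measure
        ennreal_mult ennreal_plus)
  finally have "ennreal (measure_pmf.prob (run n r lam P (Suc t)) {s. \<not> hit n r lam s})
      \<le> ennreal (measure_pmf.prob (run n r lam P t) A + q * measure_pmf.prob (run n r lam P t) B)"
    by (simp only: measure_pmf.emeasure_eq_measure)
  then show ?thesis using q unfolding q_def by (subst (asm) ennreal_le_iff) auto
qed

definition time_bound :: "nat \<Rightarrow> nat \<Rightarrow> nat \<Rightarrow> real" where
  "time_bound n r lam =
     2 + 1 / (real lam * jump_prob n (2 * r)) + (ln (real lam * real n) + 1) / jump_prob n 1"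

lemma expected_T_le_time_bound:
  assumes valid: "valid_migration n r lam E P" and n: "2 \<le> n" "2 * r \<le> n" and lam: "1 \<le> lam"
  shows "expected_T n r lam P \<le> ennreal (time_bound n r lam)"
proof -
  define u where "u t = measure_pmf.prob (run n r lam P t) {s. \<not> hit n r lam s}" for t
  define a where "a t = measure_pmf.prob (run n r lam P t) {s. potential n r lam s \<noteq> 0}" for t
  define b where
    "b t = measure_pmf.prob (run n r lam P t) {s. \<not> hit n r lam s \<and> potential n r lam s = 0}" for t
  define q where "q = (1 - jump_prob n (2 * r)) ^ lam"
  define K where "K = real lam * real n"
  have n1: "1 \<le> n" using n by simp
  have K: "1 \<le> K" using mult_mono[of 1 "real lam" 1 "real n"] lam n1 unfolding K_def by simp
  have q: "q < 1" "1 / (1 - q) \<le> 1 + 1 / (real lam * jump_prob n (2 * r))"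
    unfolding q_def
    using inverse_one_minus_power_le[OF jump_prob_pos[OF n(1)] jump_prob_le_1[OF n1] lam] by auto
  have split: "u t = a t + b t" for t
  proof -
    have "hit n r lam s \<Longrightarrow> potential n r lam s = 0" for s by (simp add: potential_def)
    then have "{s. \<not> hit n r lam s}
        = {s. potential n r lam s \<noteq> 0} \<union> {s. \<not> hit n r lam s \<and> potential n r lam s = 0}"
      by auto
    then show ?thesis
      unfolding u_def a_def b_def by (simp add: measure_pmf.finite_measure_Union disjoint_iff)
  qed
  have a: "a t \<le> min 1 (K * (1 - jump_prob n 1) ^ t)" for t
    using prob_potential_pos_run[OF valid n1, of t] unfolding a_def K_def by (simp add: mult.commute)
  have partial: "(\<Sum>t<N. u t) \<le> time_bound n r lam" for N
  proof -
    have "(\<Sum>t<N. u t) \<le> 1 / (1 - q) + (\<Sum>t<N. a t)"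
      by (rule sum_le_of_leaking_recurrence[OF split])
        (use prob_not_hit_run_Suc[OF valid n1 n(2)] q in \<open>auto simp: u_def a_def b_def q_def\<close>)
    also have "(\<Sum>t<N. a t) \<le> (\<Sum>t<N. min 1 (K * (1 - jump_prob n 1) ^ t))"
      by (intro sum_mono a)
    also have "\<dots> \<le> (ln K + 1) / jump_prob n 1 + 1"
      by (intro sum_min_one_geometric_le K jump_prob_pos[OF n(1)] jump_prob_le_1[OF n1])
    finally show ?thesis using q(2) unfolding time_bound_def K_def by simp
  qed
  have "expected_T n r lam P = (\<Sum>t. ennreal (u t))" unfolding expected_T_def u_def ..
  also have "\<dots> \<le> ennreal (time_bound n r lam)"
    using partial by (intro suminf_le_const) (auto simp: u_def intro: ennreal_leI)
  finally show ?thesis .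
qed

lemma one_minus_inverse_power_ge:
  assumes n: "2 \<le> n"
  shows "exp (-2) \<le> (1 - 1 / real n) ^ n"
proof -
  have "- (1 / real n) - 2 * (1 / real n)\<^sup>2 \<le> ln (1 - 1 / real n)"
    using n by (intro ln_one_minus_pos_lower_bound) auto
  then have "real n * (- (1 / real n) - 2 * (1 / real n)\<^sup>2) \<le> real n * ln (1 - 1 / real n)"
    by (intro mult_left_mono) auto
  moreover have "real n * (- (1 / real n) - 2 * (1 / real n)\<^sup>2) = -1 - 2 / real n"
    using n by (simp add: field_simps power2_eq_square)
  moreover have "2 / real n \<le> 1" using n by auto
  ultimately have "exp (-2) \<le> exp (real n * ln (1 - 1 / real n))" by simp
  also have "\<dots> = (1 - 1 / real n) ^ n"
    using n by (simp add: ln_realpow[symmetric])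
  finally show ?thesis .
qed

lemma inverse_jump_prob_le:
  assumes n: "2 \<le> n"
  shows "1 / jump_prob n k \<le> exp 2 * real n ^ k"
proof -
  have "1 / jump_prob n k = real n ^ k / (1 - 1 / real n) ^ n"
    unfolding jump_prob_def by (simp add: power_one_over)
  also have "\<dots> \<le> real n ^ k / exp (-2)"
    using one_minus_inverse_power_ge[OF n] n by (intro divide_left_mono mult_pos_pos) auto
  also have "\<dots> = exp 2 * real n ^ k" by (simp add: exp_minus divide_inverse mult.commute)
  finally show ?thesis .
qed

lemma n_ln_le_of_lam_le:
  fixes n lam r :: nat and B :: real
  assumes n: "3 \<le> n" and lam: "1 \<le> lam" and r: "1 \<le> r"
    and lam_le: "real lam \<le> B * (real n ^ (2 * r - 1) / ln (real n))"
  shows "1 \<le> ln (real n)" "real n * ln (real n) \<le> B * (real n ^ (2 * r) / real lam)"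
proof -
  show L: "1 \<le> ln (real n)"
    using exp_le n ln_ge_iff[of "real n" 1] by simp
  have "real lam * ln (real n) \<le> B * (real n ^ (2 * r - 1) / ln (real n)) * ln (real n)"
    using lam_le L by (intro mult_right_mono) auto
  also have "\<dots> = B * real n ^ (2 * r - 1)" using L by simp
  finally have "real lam * ln (real n) * real n \<le> B * real n ^ (2 * r - 1) * real n"
    by (intro mult_right_mono) auto
  also have "\<dots> = B * real n ^ (2 * r)"
    using r by (simp add: power_eq_if[of _ "2 * r"])
  finally show "real n * ln (real n) \<le> B * (real n ^ (2 * r) / real lam)"
    using lam by (simp add: field_simps)
qed

lemma time_bound_le:
  fixes n lam k r :: nat and B :: real
  assumes n: "3 \<le> n" and lam: "1 \<le> lam" and r: "1 \<le> r"
    and lam_le: "real lam \<le> B * (real n ^ (2 * r - 1) / ln (real n))" and poly: "lam \<le> n ^ k"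
  shows "time_bound n r lam \<le> (exp 2 + exp 2 * (real k + 2) * B + 2 * B) * real n ^ (2 * r) / real lam"
proof -
  define X where "X = real n ^ (2 * r) / real lam"
  define L where "L = ln (real n)"
  have L: "1 \<le> L" and nL: "real n * L \<le> B * X"
    using n_ln_le_of_lam_le[OF n lam r lam_le] unfolding L_def X_def by auto
  have "1 \<le> real n * L" using mult_mono[of 1 "real n" 1 L] n L by simp
  then have T0: "2 \<le> 2 * (B * X)" using nL by linarith
  have T1: "1 / (real lam * jump_prob n (2 * r)) \<le> exp 2 * X"
    using divide_right_mono[OF inverse_jump_prob_le[of n "2 * r"], of "real lam"] n
    unfolding X_def by (simp add: mult.commute)
  have "ln (real lam) \<le> ln (real n ^ k)"
    using poly lam n by (subst ln_le_cancel_iff) (auto simp flip: of_nat_power)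
  also have "\<dots> = real k * L" using n unfolding L_def by (simp add: ln_realpow)
  finally have "ln (real lam * real n) + 1 \<le> (real k + 2) * L"
    using lam n L unfolding L_def by (simp add: ln_mult algebra_simps)
  moreover have "0 \<le> ln (real lam * real n) + 1"
    using mult_mono[of 1 "real lam" 1 "real n"] lam n by simp
  moreover have "1 / jump_prob n 1 \<le> exp 2 * real n" using inverse_jump_prob_le[of n 1] n by simp
  ultimately have "(ln (real lam * real n) + 1) * (1 / jump_prob n 1)
      \<le> (real k + 2) * L * (exp 2 * real n)"
    using jump_prob_nonneg[of n 1] by (intro mult_mono) auto
  also have "\<dots> = exp 2 * (real k + 2) * (real n * L)" by (simp add: algebra_simps)
  also have "\<dots> \<le> exp 2 * (real k + 2) * (B * X)"
    using nL by (intro mult_left_mono) auto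
  finally have T2: "(ln (real lam * real n) + 1) / jump_prob n 1 \<le> exp 2 * (real k + 2) * (B * X)"
    by simp
  have "time_bound n r lam \<le> (exp 2 + exp 2 * (real k + 2) * B + 2 * B) * X"
    using T0 T1 T2 unfolding time_bound_def by (simp add: algebra_simps)
  then show ?thesis unfolding X_def by simp
qed

theorem lemma3:
  fixes r :: nat and lam :: "nat \<Rightarrow> nat"
  assumes "r \<ge> 2"
    and "(\<lambda>n. real (lam n)) \<in> O(\<lambda>n. real n ^ (2 * r - 1) / ln (real n))"
    and "\<exists>k. \<forall>\<^sub>F n in sequentially. lam n \<le> n ^ k"
    and "\<forall>n. lam n \<ge> 1"
  shows "\<exists>C>0. \<forall>\<^sub>F n in sequentially. \<forall>E P. valid_migration n r (lam n) E P \<longrightarrow>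
           expected_T n r (lam n) P \<le> ennreal (C * real n ^ (2 * r) / real (lam n))"
proof -
  obtain B where B: "0 < B" and bigO: "\<forall>\<^sub>F n in sequentially.
      norm (real (lam n)) \<le> B * norm (real n ^ (2 * r - 1) / ln (real n))"
    using assms(2) by (elim landau_o.bigE)
  obtain k where poly: "\<forall>\<^sub>F n in sequentially. lam n \<le> n ^ k" using assms(3) by blast
  define C where "C = exp 2 + exp 2 * (real k + 2) * B + 2 * B"
  have "\<forall>\<^sub>F n in sequentially. \<forall>E P. valid_migration n r (lam n) E P \<longrightarrow>
      expected_T n r (lam n) P \<le> ennreal (C * real n ^ (2 * r) / real (lam n))"
    using bigO poly eventually_ge_at_top[of "max 3 (2 * r)"]
  proof eventually_elim
    case (elim n)
    then have n: "3 \<le> n" "2 * r \<le> n" by auto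
    have lam: "1 \<le> lam n" using assms(4) by simp
    have "real (lam n) \<le> B * (real n ^ (2 * r - 1) / ln (real n))" using elim(1) n by simp
    then have "time_bound n r (lam n) \<le> C * real n ^ (2 * r) / real (lam n)"
      unfolding C_def using time_bound_le[OF n(1) lam _ _ elim(2)] assms(1) by simp
    moreover have "2 \<le> n" using n by simp
    ultimately show ?case
      using expected_T_le_time_bound[OF _ _ n(2) lam] by (blast intro: order_trans ennreal_leI)
  qed
  moreover have "0 < C" unfolding C_def using B by (intro add_pos_nonneg) auto
  ultimately show ?thesis by blast
qed

end
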